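(* Assume the standing model below. Let $\mathbf{a}\in(0,\infty)^n$, let $\mathbf{x}=\mathbf{x}^*(\mathbf{a})=(\mathbf{s};\mathbf{r})$, and let $$v_i=a_i+\sum_j M^s_{ij}s_j+\sum_j M^d_{ij}r_j$$ be the total asset value of firm $i$. Suppose $v_i\neq d_i$ for all $i=1,\dots,n$, and define the solvency vector $\boldsymbol{\xi}\in\{0,1\}^n$ by $\xi_i=1$ if $v_i>d_i$ and $\xi_i=0$ otherwise. Then: 1. The matrix $$\mathbf{I}_{2n}-\operatorname{diag}\big((\boldsymbol{\xi};\mathbf{1}-\boldsymbol{\xi})\big)\begin{pmatrix}\mathbf{M}^s&\mathbf{M}^d\\ \mathbf{M}^s&\mathbf{M}^d\end{pmatrix}$$ is invertible. 2. $\mathbf{x}^*$ is differentiable at $\mathbf{a}$, with $2n\times n$ Jacobian $$\frac{\partial \mathbf{x}^*}{\partial \mathbf{a}}(\mathbf{a})=\left[\mathbf{I}_{2n}-\operatorname{diag}\big((\boldsymbol{\xi};\mathbf{1}-\boldsymbol{\xi})\big)\begin{pmatrix}\mathbf{M}^s&\mathbf{M}^d\\ \mathbf{M}^s&\mathbf{M}^d\end{pmatrix}\right]^{-1}\begin{pmatrix}\operatorname{diag}(\boldsymbol{\xi})\\ \operatorname{diag}(\mathbf{1}-\boldsymbol{\xi})\end{pmatrix}.$$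
   Context: Standing model (network valuation with cross-holdings). There are $n$ firms. Cross-holding matrices. $\mathbf{M}^s,\mathbf{M}^d\in\mathbb{R}^{n\times n}$ are matrices of equity and debt cross-holding fractions: firm $i$ holds fraction $M^s_{ij}$ of firm $j$'s equity and fraction $M^d_{ij}$ of firm $j$'s debt. They satisfy: - $M^s_{ii}=M^d_{ii}=0$ for all $i$; - $M^s_{ij},M^d_{ij}\ge 0$ for all $i,j$; - $\sum_i M^s_{ij}<1$ and $\sum_i M^d_{ij}<1$ for every $j$. Asset and debt data. Firm $i$ has external asset value $a_i>0$ and nominal debt $d_i>0$ (fixed). Fixed-point map. For $\mathbf{x}=(\mathbf{s};\mathbf{r})\in\mathbb{R}^{2n}$ (equity values $\mathbf{s}$ stacked over debt recovery values $\mathbf{r}$), define $\mathbf{g}=(g^s_1,\dots,g^s_n,g^r_1,\dots,g^r_n)$ by $$g^s_i(\mathbf{a},\mathbf{x})=\max\Big\{0,\;a_i+\sum_j M^s_{ij}s_j+\sum_j M^d_{ij}r_j-d_i\Big\},$$ $$g^r_i(\mathbf{a},\mathbf{x})=\min\Big\{d_i,\;a_i+\sum_j M^s_{ij}s_j+\sum_j M^d_{ij}r_j\Big\}.$$ For every $\mathbf{a}\in(0,\infty)^n$ the equation $\mathbf{x}=\mathbf{g}(\mathbf{a},\mathbf{x})$ has a unique (nonnegative) solution, denoted $\mathbf{x}^*(\mathbf{a})=(\mathbf{s}^*(\mathbf{a});\mathbf{r}^*(\mathbf{a}))$. Notation. $(\mathbf{u};\mathbf{w})$ denotes row-wise stacking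 of vectors, and $\operatorname{diag}(\mathbf{u})$ denotes the diagonal matrix with diagonal $\mathbf{u}$. *)

theory Defs
  imports "HOL-Analysis.Analysis"
begin

text \<open>Firms are indexed by a finite type 'n (so n = CARD('n)). Vectors in R^(2n) are indexed
by the sum type 'n + 'n: index Inl i is the equity coordinate s_i, index Inr i the debt
recovery coordinate r_i.\<close>

definition stack :: "real^'n \<Rightarrow> real^'n \<Rightarrow> real^('n + 'n)" where
  "stack s r = (\<chi> k. case k of Inl i \<Rightarrow> s $ i | Inr i \<Rightarrow> r $ i)"

definition upper :: "real^('n + 'n) \<Rightarrow> real^'n" where
  "upper x = (\<chi> i. x $ Inl i)"

definition lower :: "real^('n + 'n) \<Rightarrow> real^'n" where
  "lower x = (\<chi> i. x $ Inr i)"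

definition totval :: "real^'n^'n \<Rightarrow> real^'n^'n \<Rightarrow> real^'n \<Rightarrow> real^('n + 'n) \<Rightarrow> real^'n" where
  "totval Ms Md a x = a + Ms *v upper x + Md *v lower x"

definition gmap :: "real^'n^'n \<Rightarrow> real^'n^'n \<Rightarrow> real^'n \<Rightarrow> real^'n \<Rightarrow> real^('n + 'n) \<Rightarrow> real^('n + 'n)" where
  "gmap Ms Md d a x =
     stack (\<chi> i. max 0 (totval Ms Md a x $ i - d $ i))
           (\<chi> i. min (d $ i) (totval Ms Md a x $ i))"

definition xstar :: "real^'n^'n \<Rightarrow> real^'n^'n \<Rightarrow> real^'n \<Rightarrow> real^'n \<Rightarrow> real^('n + 'n)" where
  "xstar Ms Md d a = (THE x. x = gmap Ms Md d a x)"

definition diagv :: "real^'n \<Rightarrow> real^'n^'n" where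
  "diagv u = (\<chi> i j. if i = j then u $ i else 0)"

definition blockM :: "real^'n^'n \<Rightarrow> real^'n^'n \<Rightarrow> real^('n + 'n)^('n + 'n)" where
  "blockM Ms Md = (\<chi> k l.
     (let i = (case k of Inl i \<Rightarrow> i | Inr i \<Rightarrow> i) in
      case l of Inl j \<Rightarrow> Ms $ i $ j | Inr j \<Rightarrow> Md $ i $ j))"

definition stackM :: "real^'n^'n \<Rightarrow> real^'n^'n \<Rightarrow> real^'n^('n + 'n)" where
  "stackM A B = (\<chi> k. case k of Inl i \<Rightarrow> A $ i | Inr i \<Rightarrow> B $ i)"

definition solvency :: "real^'n \<Rightarrow> real^'n \<Rightarrow> real^'n" where
  "solvency v d = (\<chi> i. if v $ i > d $ i then 1 else 0)"

end

theory Submission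
  imports Defs
begin

text \<open>Measured in the \<open>\<ell>\<^sub>1\<close>-norm, the map \<open>g(a, \<cdot>)\<close> is a contraction with constant
\<open>c < 1\<close>, the largest column sum of \<open>M\<^sup>s\<close> and \<open>M\<^sup>d\<close>: the split \<open>v \<mapsto> (max 0 (v - d), min d v)\<close>
preserves \<open>\<ell>\<^sub>1\<close>-distances, and the holdings shrink them by the factor \<open>c\<close>. The same estimate
makes the total values \<open>v(a)\<close> Lipschitz in \<open>a\<close>, so if no \<open>v\<^sub>i(a)\<close> equals \<open>d\<^sub>i\<close> the solvency
pattern \<open>\<xi>\<close> is constant near \<open>a\<close>. There the fixed-point equation is the linear system
\<open>A x = E a + const\<close> with \<open>A = I - diag(\<xi>; 1 - \<xi>) M\<close>, \<open>E = (diag \<xi>; diag (1 - \<xi>))\<close>, so \<open>x\<^sup>*\<close> is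
affine near \<open>a\<close>. \<open>A\<close> is injective because \<open>A x = 0\<close> forces \<open>\<parallel>x\<parallel>\<^sub>1 \<le> c \<parallel>x\<parallel>\<^sub>1\<close>.\<close>

definition l1norm :: "real^'m \<Rightarrow> real" where
  "l1norm x = (\<Sum>k\<in>UNIV. \<bar>x $ k\<bar>)"

lemma sum_UNIV_Plus:
  "(\<Sum>k\<in>(UNIV::('a::finite + 'b::finite) set). f k) = (\<Sum>i\<in>UNIV. f (Inl i)) + (\<Sum>j\<in>UNIV. f (Inr j))"
  using sum.Plus[of "UNIV::'a set" "UNIV::'b set" f] by (simp add: comp_def)

lemma l1norm_Plus:
  "l1norm (x::real^('a::finite + 'b::finite)) = (\<Sum>i\<in>UNIV. \<bar>x $ Inl i\<bar>) + (\<Sum>j\<in>UNIV. \<bar>x $ Inr j\<bar>)"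
  unfolding l1norm_def by (rule sum_UNIV_Plus)

lemma l1norm_triangle: "l1norm (x + y) \<le> l1norm x + l1norm y"
  unfolding l1norm_def sum.distrib[symmetric] by (intro sum_mono) (simp add: abs_triangle_ineq)

lemma norm_le_l1norm: "norm x \<le> l1norm x"
  unfolding l1norm_def by (rule norm_le_l1_cart)

lemma l1norm_le_card_norm: "l1norm (x::real^'m) \<le> real CARD('m) * norm x"
proof -
  have "l1norm x \<le> (\<Sum>k\<in>(UNIV::'m set). norm x)"
    unfolding l1norm_def by (intro sum_mono component_le_norm_cart)
  then show ?thesis by simp
qed

lemma l1norm_le_mult_imp_zero:
  assumes "l1norm x \<le> c * l1norm x" and "c < 1"
  shows "x = 0"
proof -
  have "l1norm x \<ge> 0" unfolding l1norm_def by (simp add: sum_nonneg)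
  with assms have "l1norm x \<le> 0" by (smt (verit) mult_le_cancel_right1)
  then have "norm x \<le> 0" using norm_le_l1norm[of x] by linarith
  then show ?thesis by simp
qed

lemma l1norm_matrix_vector_le:
  fixes M :: "real^'m^'k"
  assumes "\<forall>i j. 0 \<le> M $ i $ j" and "\<forall>j. (\<Sum>i\<in>UNIV. M $ i $ j) \<le> c"
  shows "l1norm (M *v x) \<le> c * l1norm x"
proof -
  have "l1norm (M *v x) = (\<Sum>i\<in>UNIV. \<bar>\<Sum>j\<in>UNIV. M $ i $ j * x $ j\<bar>)"
    by (simp add: l1norm_def matrix_vector_mult_def)
  also have "\<dots> \<le> (\<Sum>i\<in>UNIV. \<Sum>j\<in>UNIV. M $ i $ j * \<bar>x $ j\<bar>)"
    by (intro sum_mono, rule order_trans[OF sum_abs]) (simp add: abs_mult assms(1))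
  also have "\<dots> = (\<Sum>j\<in>UNIV. (\<Sum>i\<in>UNIV. M $ i $ j) * \<bar>x $ j\<bar>)"
    by (subst sum.swap) (simp add: sum_distrib_right)
  also have "\<dots> \<le> (\<Sum>j\<in>UNIV. c * \<bar>x $ j\<bar>)"
    using assms(2) by (intro sum_mono mult_right_mono) auto
  finally show ?thesis by (simp add: l1norm_def sum_distrib_left)
qed

lemma banach_fix_funpow:
  fixes f :: "'a::complete_space \<Rightarrow> 'a"
  assumes "0 \<le> c" "c < 1" and "\<forall>x y. dist ((f ^^ k) x) ((f ^^ k) y) \<le> c * dist x y"
  shows "\<exists>!x. f x = x"
proof -
  obtain z where z: "(f ^^ k) z = z" and uniq: "\<And>y. (f ^^ k) y = y \<Longrightarrow> y = z"
    using banach_fix_type[OF assms] by blast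
  have fix_iter: "(f ^^ n) y = y" if "f y = y" for y n
    using that by (induction n) auto
  have "(f ^^ k) (f z) = f z"
    by (metis funpow_swap1 z)
  then have "f z = z" by (rule uniq)
  then show ?thesis using uniq fix_iter by blast
qed

definition column_bound :: "real^'n^'n \<Rightarrow> real^'n^'n \<Rightarrow> real \<Rightarrow> bool" where
  "column_bound Ms Md c \<longleftrightarrow> 0 \<le> c \<and> c < 1 \<and> (\<forall>i j. 0 \<le> Ms $ i $ j \<and> 0 \<le> Md $ i $ j)
     \<and> (\<forall>j. (\<Sum>i\<in>UNIV. Ms $ i $ j) \<le> c \<and> (\<Sum>i\<in>UNIV. Md $ i $ j) \<le> c)"

lemma column_bound_exists:
  fixes Ms Md :: "real^'n^'n"
  assumes "\<forall>i j. Ms $ i $ j \<ge> 0" "\<forall>i j. Md $ i $ j \<ge> 0"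
    "\<forall>j. (\<Sum>i\<in>UNIV. Ms $ i $ j) < 1" "\<forall>j. (\<Sum>i\<in>UNIV. Md $ i $ j) < 1"
  shows "\<exists>c. column_bound Ms Md c"
proof -
  define S where "S = insert 0 (range (\<lambda>j. \<Sum>i\<in>UNIV. Ms $ i $ j) \<union> range (\<lambda>j. \<Sum>i\<in>UNIV. Md $ i $ j))"
  have fin: "finite S" unfolding S_def by simp
  have "Max S < 1" "0 \<le> Max S" using fin assms(3,4) by (auto simp: S_def)
  moreover have "(\<Sum>i\<in>UNIV. Ms $ i $ j) \<le> Max S" "(\<Sum>i\<in>UNIV. Md $ i $ j) \<le> Max S" for j
    by (intro Max_ge[OF fin]; simp add: S_def)+
  ultimately show ?thesis using assms(1,2) unfolding column_bound_def by blast
qed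

definition held_value :: "real^'n^'n \<Rightarrow> real^'n^'n \<Rightarrow> real^('n + 'n) \<Rightarrow> real^'n" where
  "held_value Ms Md x = Ms *v upper x + Md *v lower x"

lemma totval_held_value: "totval Ms Md a x = a + held_value Ms Md x"
  by (simp add: totval_def held_value_def)

lemma held_value_diff: "held_value Ms Md (x - y) = held_value Ms Md x - held_value Ms Md y"
proof -
  have "upper (x - y) = upper x - upper y" "lower (x - y) = lower x - lower y"
    by (simp_all add: upper_def lower_def vec_eq_iff)
  then show ?thesis by (simp add: held_value_def matrix_vector_mult_diff_distrib)
qed

lemma l1norm_held_value_le:
  assumes "column_bound Ms Md c"
  shows "l1norm (held_value Ms Md x) \<le> c * l1norm x"
proof -
  have "l1norm (held_value Ms Md x) \<le> l1norm (Ms *v upper x) + l1norm (Md *v lower x)"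
    unfolding held_value_def by (rule l1norm_triangle)
  also have "\<dots> \<le> c * l1norm (upper x) + c * l1norm (lower x)"
    using assms unfolding column_bound_def by (intro add_mono l1norm_matrix_vector_le) auto
  also have "\<dots> = c * l1norm x"
    by (simp add: l1norm_Plus l1norm_def upper_def lower_def distrib_left)
  finally show ?thesis .
qed

lemma l1norm_totval_diff_le:
  assumes "column_bound Ms Md c"
  shows "l1norm (totval Ms Md a x - totval Ms Md b y) \<le> l1norm (a - b) + c * l1norm (x - y)"
proof -
  have "totval Ms Md a x - totval Ms Md b y = (a - b) + held_value Ms Md (x - y)"
    by (simp add: totval_held_value held_value_diff)
  then show ?thesis
    using l1norm_triangle l1norm_held_value_le[OF assms, of "x - y"] by (smt (verit))
qed

lemma gmap_Inl [simp]: "gmap Ms Md d a x $ Inl i = max 0 (totval Ms Md a x $ i - d $ i)"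
  by (simp add: gmap_def stack_def)

lemma gmap_Inr [simp]: "gmap Ms Md d a x $ Inr i = min (d $ i) (totval Ms Md a x $ i)"
  by (simp add: gmap_def stack_def)

lemma l1norm_gmap_diff:
  "l1norm (gmap Ms Md d a x - gmap Ms Md d b y) = l1norm (totval Ms Md a x - totval Ms Md b y)"
proof -
  have "\<And>u v e :: real. \<bar>max 0 (u - e) - max 0 (v - e)\<bar> + \<bar>min e u - min e v\<bar> = \<bar>u - v\<bar>"
    by (auto simp: max_def min_def)
  then show ?thesis by (simp add: l1norm_Plus l1norm_def sum.distrib[symmetric])
qed

lemma gmap_l1_contraction:
  assumes "column_bound Ms Md c"
  shows "l1norm (gmap Ms Md d a x - gmap Ms Md d a y) \<le> c * l1norm (x - y)"
proof -
  have "l1norm (a - a) = 0" by (simp add: l1norm_def)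
  then show ?thesis using l1norm_totval_diff_le[OF assms, of a x a y] by (simp add: l1norm_gmap_diff)
qed

lemma ex1_gmap_fixpoint:
  fixes Ms Md :: "real^'n^'n"
  assumes cb: "column_bound Ms Md c"
  shows "\<exists>!x. gmap Ms Md d a x = x"
proof -
  let ?g = "gmap Ms Md d a"
  define N where "N = real CARD('n + 'n)"
  have c: "0 \<le> c" "c < 1" using cb by (auto simp: column_bound_def)
  have iter: "l1norm ((?g ^^ k) x - (?g ^^ k) y) \<le> c ^ k * l1norm (x - y)" for k x y
  proof (induction k)
    case (Suc k)
    then show ?case
      using gmap_l1_contraction[OF cb, of d a "(?g ^^ k) x" "(?g ^^ k) y"]
        mult_left_mono[OF Suc c(1)] by simp
  qed simp
  have "0 < CARD('n + 'n)" by (rule finite_UNIV_card_ge_0) simp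
  then have N_pos: "N > 0" unfolding N_def by simp
  then obtain k where k: "c ^ k < 1 / N"
    using real_arch_pow_inv[of "1 / N" c] c(2) by auto
  have "dist ((?g ^^ k) x) ((?g ^^ k) y) \<le> (c ^ k * N) * dist x y" for x y
  proof -
    have "dist ((?g ^^ k) x) ((?g ^^ k) y) \<le> l1norm ((?g ^^ k) x - (?g ^^ k) y)"
      by (simp add: dist_norm norm_le_l1norm)
    also have "\<dots> \<le> c ^ k * l1norm (x - y)"
      by (rule iter)
    also have "\<dots> \<le> c ^ k * (N * dist x y)"
      unfolding N_def dist_norm by (intro mult_left_mono l1norm_le_card_norm zero_le_power c(1))
    finally show ?thesis by simp
  qed
  moreover have "c ^ k * N < 1" using k by (simp add: N_def field_simps)
  ultimately show ?thesis
    using banach_fix_funpow[where c = "c ^ k * N" and f = ?g and k = k] c N_pos by simp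
qed

lemma xstar_fixpoint:
  assumes "column_bound Ms Md c"
  shows "gmap Ms Md d a (xstar Ms Md d a) = xstar Ms Md d a"
proof -
  have "\<exists>!x. x = gmap Ms Md d a x"
    using ex1_gmap_fixpoint[OF assms] by (metis (mono_tags))
  then show ?thesis unfolding xstar_def by (rule theI'[THEN sym])
qed

lemma lipschitz_totval_xstar:
  assumes cb: "column_bound Ms Md c"
  shows "(real CARD('n) / (1 - c))-lipschitz_on UNIV (\<lambda>b::real^'n. totval Ms Md b (xstar Ms Md d b))"
proof (rule lipschitz_onI)
  have c: "0 \<le> c" "c < 1" using cb by (auto simp: column_bound_def)
  then show "0 \<le> real CARD('n) / (1 - c)" by simp
  fix a b :: "real^'n"
  let ?v = "\<lambda>b. totval Ms Md b (xstar Ms Md d b)"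
  have "l1norm (?v a - ?v b) \<le> l1norm (a - b) + c * l1norm (?v a - ?v b)"
    using l1norm_totval_diff_le[OF cb, of a "xstar Ms Md d a" b "xstar Ms Md d b"]
      l1norm_gmap_diff[of Ms Md d a "xstar Ms Md d a" b "xstar Ms Md d b"]
    by (simp add: xstar_fixpoint[OF cb])
  then have "(1 - c) * l1norm (?v a - ?v b) \<le> real CARD('n) * dist a b"
    using l1norm_le_card_norm[of "a - b"] by (simp add: dist_norm algebra_simps)
  then have "l1norm (?v a - ?v b) \<le> real CARD('n) / (1 - c) * dist a b"
    using c by (simp add: field_simps)
  then show "dist (?v a) (?v b) \<le> real CARD('n) / (1 - c) * dist a b"
    using norm_le_l1norm[of "?v a - ?v b"] by (simp add: dist_norm)
qed

definition regime_matrix :: "real^'n^'n \<Rightarrow> real^'n^'n \<Rightarrow> real^'n \<Rightarrow> real^('n + 'n)^('n + 'n)" where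
  "regime_matrix Ms Md \<xi> = mat 1 - diagv (stack \<xi> (1 - \<xi>)) ** blockM Ms Md"

definition regime_input :: "real^'n \<Rightarrow> real^'n^('n + 'n)" where
  "regime_input \<xi> = stackM (diagv \<xi>) (diagv (1 - \<xi>))"

lemma diagv_mult [simp]: "(diagv u *v y) $ k = u $ k * y $ k"
proof -
  have "(diagv u *v y) $ k = (\<Sum>j\<in>UNIV. (if k = j then u $ k else 0) * y $ j)"
    by (simp add: diagv_def matrix_vector_mult_def)
  also have "\<dots> = (\<Sum>j\<in>UNIV. if j = k then u $ k * y $ k else 0)"
    by (rule sum.cong) auto
  finally show ?thesis by simp
qed

lemma blockM_mult [simp]:
  "(blockM Ms Md *v x) $ Inl i = held_value Ms Md x $ i"
  "(blockM Ms Md *v x) $ Inr i = held_value Ms Md x $ i"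
  by (simp_all add: blockM_def matrix_vector_mult_def sum_UNIV_Plus held_value_def upper_def lower_def)

lemma stack_nth [simp]: "stack u w $ Inl i = u $ i" "stack u w $ Inr i = w $ i"
  by (simp_all add: stack_def)

lemma regime_matrix_mult:
  "(regime_matrix Ms Md \<xi> *v x) $ k = x $ k - stack \<xi> (1 - \<xi>) $ k * (blockM Ms Md *v x) $ k"
  by (simp add: regime_matrix_def matrix_vector_mult_diff_rdistrib matrix_vector_mul_assoc[symmetric])

lemma stackM_mult [simp]:
  "(stackM P Q *v b) $ Inl i = (P *v b) $ i" "(stackM P Q *v b) $ Inr i = (Q *v b) $ i"
  by (simp_all add: stackM_def matrix_vector_mult_def)

lemma regime_input_mult [simp]:
  "(regime_input \<xi> *v b) $ Inl i = \<xi> $ i * b $ i"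
  "(regime_input \<xi> *v b) $ Inr i = (1 - \<xi> $ i) * b $ i"
  by (simp_all add: regime_input_def)

lemma invertible_regime_matrix:
  assumes cb: "column_bound Ms Md c" and zero_one: "\<forall>i. \<xi> $ i = 0 \<or> \<xi> $ i = 1"
  shows "invertible (regime_matrix Ms Md \<xi>)"
proof -
  have "x = 0" if "regime_matrix Ms Md \<xi> *v x = 0" for x
  proof -
    let ?w = "held_value Ms Md x"
    have "x $ Inl i = \<xi> $ i * ?w $ i" "x $ Inr i = (1 - \<xi> $ i) * ?w $ i" for i
      using arg_cong[OF that, of "\<lambda>y. y $ Inl i"] arg_cong[OF that, of "\<lambda>y. y $ Inr i"]
      by (simp_all add: regime_matrix_mult)
    moreover have "\<bar>\<xi> $ i * ?w $ i\<bar> + \<bar>(1 - \<xi> $ i) * ?w $ i\<bar> = \<bar>?w $ i\<bar>" for i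
      using zero_one by (cases "\<xi> $ i = 0") auto
    ultimately have "l1norm x = l1norm ?w"
      by (simp add: l1norm_Plus l1norm_def sum.distrib[symmetric])
    then show "x = 0"
      using l1norm_held_value_le[OF cb, of x] cb
      by (intro l1norm_le_mult_imp_zero[of _ c]) (auto simp: column_bound_def)
  qed
  then show ?thesis
    by (simp add: invertible_left_inverse matrix_left_invertible_ker)
qed

text \<open>No hypothesis \<open>v\<^sub>i \<noteq> d\<^sub>i\<close> is needed here: at a tie both branches of \<open>g\<close> agree.\<close>

lemma gmap_fixpoint_regime_eq:
  fixes Ms Md :: "real^'n^'n"
  assumes fp: "gmap Ms Md d a x = x" and \<xi>: "\<xi> = solvency (totval Ms Md a x) d"
  shows "regime_matrix Ms Md \<xi> *v x = regime_input \<xi> *v a + stack (- (\<xi> * d)) (\<xi> * d)"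
proof -
  have s: "x $ Inl i = max 0 (a $ i + held_value Ms Md x $ i - d $ i)"
    and r: "x $ Inr i = min (d $ i) (a $ i + held_value Ms Md x $ i)" for i
    using arg_cong[OF fp, of "\<lambda>y. y $ Inl i"] arg_cong[OF fp, of "\<lambda>y. y $ Inr i"]
    by (simp_all add: totval_held_value)
  show ?thesis
  unfolding vec_eq_iff
  proof
    fix k :: "'n + 'n"
    show "(regime_matrix Ms Md \<xi> *v x) $ k = (regime_input \<xi> *v a + stack (- (\<xi> * d)) (\<xi> * d)) $ k"
      by (cases k) (simp_all add: regime_matrix_mult s r \<xi> solvency_def totval_held_value max_def min_def algebra_simps)
  qed
qed

lemma matrix_inv_left:
  assumes "invertible (A::real^'m^'m)"
  shows "matrix_inv A ** A = mat 1"
  using someI_ex[OF assms[unfolded invertible_def]] unfolding matrix_inv_def by blast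

lemma gmap_fixpoints_same_regime:
  fixes Ms Md :: "real^'n^'n"
  assumes fp: "gmap Ms Md d a x = x" "gmap Ms Md d b y = y"
    and regime: "solvency (totval Ms Md a x) d = \<xi>" "solvency (totval Ms Md b y) d = \<xi>"
    and inv: "invertible (regime_matrix Ms Md \<xi>)"
  shows "y = x + (matrix_inv (regime_matrix Ms Md \<xi>) ** regime_input \<xi>) *v (b - a)"
proof -
  let ?A = "regime_matrix Ms Md \<xi>"
  have "?A *v (y - x) = regime_input \<xi> *v (b - a)"
    using gmap_fixpoint_regime_eq[OF fp(1) regime(1)[symmetric]]
      gmap_fixpoint_regime_eq[OF fp(2) regime(2)[symmetric]]
    by (simp add: matrix_vector_mult_diff_distrib)
  then have "matrix_inv ?A *v (?A *v (y - x)) = matrix_inv ?A *v (regime_input \<xi> *v (b - a))"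
    by simp
  then show ?thesis
    by (simp add: matrix_vector_mul_assoc matrix_inv_left[OF inv] algebra_simps)
qed

lemma eventually_solvency_eq:
  assumes lim: "(f \<longlongrightarrow> l) F" and ne: "\<forall>i. l $ i \<noteq> d $ i"
  shows "\<forall>\<^sub>F x in F. solvency (f x) d = solvency l d"
proof -
  have "\<forall>\<^sub>F x in F. (d $ i < f x $ i \<longleftrightarrow> d $ i < l $ i)" for i
  proof (cases "d $ i < l $ i")
    case True
    then show ?thesis
      using order_tendstoD(1)[OF tendsto_vec_nth[OF lim] True] by (auto elim: eventually_mono)
  next
    case False
    then have "l $ i < d $ i" using ne by (meson linorder_neqE_linordered_idom)
    from order_tendstoD(2)[OF tendsto_vec_nth[OF lim] this] show ?thesis
      using False by (auto elim: eventually_mono)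
  qed
  then have "\<forall>\<^sub>F x in F. \<forall>i. (d $ i < f x $ i \<longleftrightarrow> d $ i < l $ i)"
    by (rule eventually_all_finite)
  then show ?thesis
    by (rule eventually_mono) (simp add: solvency_def vec_eq_iff)
qed

lemma xstar_locally_affine:
  fixes Ms Md :: "real^'n^'n"
  assumes cb: "column_bound Ms Md c"
    and ne: "\<forall>i. totval Ms Md a (xstar Ms Md d a) $ i \<noteq> d $ i"
    and \<xi>: "\<xi> = solvency (totval Ms Md a (xstar Ms Md d a)) d"
  shows "\<forall>\<^sub>F b in at a. xstar Ms Md d b
           = xstar Ms Md d a + (matrix_inv (regime_matrix Ms Md \<xi>) ** regime_input \<xi>) *v (b - a)"
proof -
  let ?v = "\<lambda>b. totval Ms Md b (xstar Ms Md d b)"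
  have "isCont ?v a"
    using lipschitz_on_continuous_within[OF lipschitz_totval_xstar[OF cb, of d] UNIV_I] by simp
  then have "\<forall>\<^sub>F b in at a. solvency (?v b) d = \<xi>"
    unfolding \<xi> isCont_def by (rule eventually_solvency_eq) (rule ne)
  moreover have "invertible (regime_matrix Ms Md \<xi>)"
    by (rule invertible_regime_matrix[OF cb]) (simp add: \<xi> solvency_def)
  ultimately show ?thesis
    using gmap_fixpoints_same_regime[OF xstar_fixpoint[OF cb] xstar_fixpoint[OF cb] \<xi>[symmetric]]
    by (auto elim: eventually_mono)
qed

lemma has_derivative_eventually_affine:
  fixes f :: "real^'m \<Rightarrow> real^'k"
  assumes "\<forall>\<^sub>F b in at a. f b = f a + J *v (b - a)" and "a \<in> S"
  shows "(f has_derivative (\<lambda>h. J *v h)) (at a within S)"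
proof -
  have "((\<lambda>b. b - a) has_derivative (\<lambda>h. h)) (at a within S)"
    by (auto intro!: derivative_eq_intros)
  then have "((\<lambda>b. f a + J *v (b - a)) has_derivative (\<lambda>h. J *v h)) (at a within S)"
    using has_derivative_add[OF has_derivative_const
        bounded_linear.has_derivative[OF matrix_vector_mul_bounded_linear]] by simp
  moreover have "\<forall>\<^sub>F b in at a within S. f a + J *v (b - a) = f b"
    using filter_leD[OF at_le[OF subset_UNIV[of S]] assms(1)] by (auto elim: eventually_mono)
  ultimately show ?thesis
    by (rule has_derivative_transform_eventually) (simp_all add: assms(2))
qed

theorem mainTheorem2:
  fixes Ms Md :: "real^'n^'n" and a d :: "real^'n"
  assumes diag_s: "\<forall>i. Ms $ i $ i = 0" and diag_d: "\<forall>i. Md $ i $ i = 0"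
    and nonneg_s: "\<forall>i j. Ms $ i $ j \<ge> 0" and nonneg_d: "\<forall>i j. Md $ i $ j \<ge> 0"
    and col_s: "\<forall>j. (\<Sum>i\<in>UNIV. Ms $ i $ j) < 1" and col_d: "\<forall>j. (\<Sum>i\<in>UNIV. Md $ i $ j) < 1"
    and d_pos: "\<forall>i. d $ i > 0"
    and a_pos: "\<forall>i. a $ i > 0"
    and v_ne: "\<forall>i. totval Ms Md a (xstar Ms Md d a) $ i \<noteq> d $ i"
  shows "let \<xi> = solvency (totval Ms Md a (xstar Ms Md d a)) d;
             A = mat 1 - diagv (stack \<xi> (1 - \<xi>)) ** blockM Ms Md;
             J = matrix_inv A ** stackM (diagv \<xi>) (diagv (1 - \<xi>))
         in invertible A \<and>
            (xstar Ms Md d has_derivative (\<lambda>h. J *v h)) (at a within {b. \<forall>i. 0 < b $ i})"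
proof -
  obtain c where cb: "column_bound Ms Md c"
    using column_bound_exists[OF nonneg_s nonneg_d col_s col_d] by blast
  define \<xi> where "\<xi> = solvency (totval Ms Md a (xstar Ms Md d a)) d"
  have "invertible (regime_matrix Ms Md \<xi>)"
    by (rule invertible_regime_matrix[OF cb]) (simp add: \<xi>_def solvency_def)
  moreover have "(xstar Ms Md d has_derivative
      (\<lambda>h. (matrix_inv (regime_matrix Ms Md \<xi>) ** regime_input \<xi>) *v h)) (at a within {b. \<forall>i. 0 < b $ i})"
    by (rule has_derivative_eventually_affine[OF xstar_locally_affine[OF cb v_ne \<xi>_def]])
      (simp add: a_pos)
  ultimately show ?thesis
    unfolding Let_def \<xi>_def regime_matrix_def regime_input_def by (rule conjI)
qed

end
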